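(* Let $F$ be a field, $\{E_1,\ldots,E_t\}$ a complete symmetric orthogonal set of idempotents in $F_{n\times n}$, and $\mathbf{z}=(z_1,\ldots,z_k)$ commuting variables. For $i=1,\ldots,t$ let $w_i(\mathbf{z})=\alpha_i\prod_{j=1}^kz_j^{t_{i,j}}$ with non-negative integers $t_{i,j}$ and $\alpha_i\in F$ satisfying $|\alpha_i|^2=1$. Then $W(\mathbf{z})=\sum_{i=1}^tw_i(\mathbf{z})E_i$ is a paraunitary matrix, i.e. $W(\mathbf{z})W^*(\mathbf{z}^{-1})=1$.
   Context: For $a\in\mathbb{C}$, $a^*=\overline a$; for other fields $a^*=a$; $|a|^2=aa^*$. For matrices, $^*$ is conjugate transpose over $\mathbb{C}$ and transpose otherwise; $W^*(\mathbf{z}^{-1})$ applies $^*$ to coefficients and replaces each $z_j$ by $z_j^{-1}$. A complete symmetric orthogonal set of idempotents is $\{E_1,\ldots,E_t\}$ with $E_i\ne 0$, $E_i^2=E_i$, $E_iE_j=0$ ($i\ne j$), $\sum_iE_i=I_n$ and $E_i^*=E_i$. *)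

theory Defs
  imports "HOL-Library.Poly_Mapping" "Jordan_Normal_Form.Matrix"
begin

text \<open>Laurent polynomials in commuting variables z_0, z_1, ... over 'a:
  finitely supported maps from integer exponent vectors to coefficients,
  with the convolution product of Poly_Mapping.\<close>
type_synonym 'a lpoly = "(nat \<Rightarrow>\<^sub>0 int) \<Rightarrow>\<^sub>0 'a"

definition lconst :: "'a::zero \<Rightarrow> 'a lpoly" where
  "lconst a = Poly_Mapping.single 0 a"

definition lmonom :: "'a::zero \<Rightarrow> nat \<Rightarrow> (nat \<Rightarrow> nat) \<Rightarrow> 'a lpoly" where
  "lmonom a k e = Poly_Mapping.single (\<Sum>j<k. Poly_Mapping.single j (int (e j))) a"

text \<open>p^*(z^{-1}): apply star to coefficients and replace each z_j by z_j^{-1}.\<close>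
definition lconj :: "('a \<Rightarrow> 'a) \<Rightarrow> 'a::comm_monoid_add lpoly \<Rightarrow> 'a lpoly" where
  "lconj s p = (\<Sum>m\<in>Poly_Mapping.keys p. Poly_Mapping.single (- m) (s (Poly_Mapping.lookup p m)))"

definition mstar :: "('a \<Rightarrow> 'a) \<Rightarrow> 'a mat \<Rightarrow> 'a mat" where
  "mstar s A = mat (dim_col A) (dim_row A) (\<lambda>(i, j). s (A $$ (j, i)))"

definition paraconj :: "('a \<Rightarrow> 'a) \<Rightarrow> 'a::comm_monoid_add lpoly mat \<Rightarrow> 'a lpoly mat" where
  "paraconj s W = mat (dim_col W) (dim_row W) (\<lambda>(i, j). lconj s (W $$ (j, i)))"

definition paraunitary :: "('a \<Rightarrow> 'a) \<Rightarrow> 'a::comm_ring_1 lpoly mat \<Rightarrow> bool" where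
  "paraunitary s W \<longleftrightarrow> W * paraconj s W = 1\<^sub>m (dim_row W)"

definition msum :: "nat \<Rightarrow> nat \<Rightarrow> (nat \<Rightarrow> 'a::comm_monoid_add mat) \<Rightarrow> 'a mat" where
  "msum n t M = mat n n (\<lambda>ij. \<Sum>i<t. M i $$ ij)"

text \<open>Complete symmetric orthogonal set of idempotents E_0, ..., E_{t-1} in F_{n x n}
  with respect to the involution s.\<close>
definition csoi :: "('a::field \<Rightarrow> 'a) \<Rightarrow> nat \<Rightarrow> nat \<Rightarrow> (nat \<Rightarrow> 'a mat) \<Rightarrow> bool" where
  "csoi s n t E \<longleftrightarrow>
     (\<forall>i<t. E i \<in> carrier_mat n n \<and> E i \<noteq> 0\<^sub>m n n \<and> E i * E i = E i \<and> mstar s (E i) = E i) \<and>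
     (\<forall>i<t. \<forall>j<t. i \<noteq> j \<longrightarrow> E i * E j = 0\<^sub>m n n) \<and>
     msum n t E = 1\<^sub>m n"

definition Wmat :: "nat \<Rightarrow> nat \<Rightarrow> nat \<Rightarrow> (nat \<Rightarrow> 'a::comm_ring_1) \<Rightarrow> (nat \<Rightarrow> nat \<Rightarrow> nat)
                     \<Rightarrow> (nat \<Rightarrow> 'a mat) \<Rightarrow> 'a lpoly mat" where
  "Wmat n t k \<alpha> tt E = msum n t (\<lambda>i. lmonom (\<alpha> i) k (tt i) \<cdot>\<^sub>m map_mat lconst (E i))"

end

theory Submission
  imports Defs
begin

text \<open>Writing \<open>W = \<Sum>\<^sub>i \<alpha>\<^sub>i z^m\<^sub>i E\<^sub>i\<close>, symmetry of the \<open>E\<^sub>i\<close> gives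
  \<open>W\<^sup>*(z\<^sup>-\<^sup>1) = \<Sum>\<^sub>j \<alpha>\<^sub>j\<^sup>* z^(-m\<^sub>j) E\<^sub>j\<close>, hence
  \<open>W W\<^sup>*(z\<^sup>-\<^sup>1) = \<Sum>\<^sub>i\<^sub>,\<^sub>j \<alpha>\<^sub>i \<alpha>\<^sub>j\<^sup>* z^(m\<^sub>i - m\<^sub>j) E\<^sub>i E\<^sub>j\<close>.
  Orthogonality kills the terms with \<open>i \<noteq> j\<close>, and the diagonal terms are
  \<open>|\<alpha>\<^sub>i|\<^sup>2 E\<^sub>i = E\<^sub>i\<close>, which sum to the identity.\<close>

lemma single_sum:
  "Poly_Mapping.single k (\<Sum>c\<in>C. f c) = (\<Sum>c\<in>C. Poly_Mapping.single k (f c))"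
  by (induction C rule: infinite_finite_induct) (auto simp: single_add)

lemma lookup_lconj:
  assumes "s 0 = 0"
  shows "Poly_Mapping.lookup (lconj s p) x = s (Poly_Mapping.lookup p (- x))"
proof -
  have "Poly_Mapping.lookup (lconj s p) x =
    (\<Sum>m\<in>Poly_Mapping.keys p. if m = - x then s (Poly_Mapping.lookup p m) else 0)"
    unfolding lconj_def lookup_sum lookup_single
    by (intro sum.cong) (auto simp: when_def)
  also have "\<dots> = s (Poly_Mapping.lookup p (- x))"
    using assms by (simp add: sum.delta' in_keys_iff)
  finally show ?thesis .
qed

lemma lconj_sum_single:
  assumes "s 0 = 0" and "\<And>a b. s (a + b) = s a + s b"
  shows "lconj s (\<Sum>i\<in>I. Poly_Mapping.single (m i) (a i)) =
         (\<Sum>i\<in>I. Poly_Mapping.single (- m i) (s (a i)))"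
proof (rule poly_mapping_eqI)
  fix x
  show "Poly_Mapping.lookup (lconj s (\<Sum>i\<in>I. Poly_Mapping.single (m i) (a i))) x =
        Poly_Mapping.lookup (\<Sum>i\<in>I. Poly_Mapping.single (- m i) (s (a i))) x"
    unfolding lookup_lconj[of s, OF assms(1)] lookup_sum lookup_single
    by (induction I rule: infinite_finite_induct) (auto simp: assms when_def)
qed

lemma index_mult_mat_monomial_sums:
  fixes A B :: "'a::comm_ring_1 lpoly mat"
  assumes A: "A \<in> carrier_mat n n" and B: "B \<in> carrier_mat n n"
    and M: "\<And>i. i \<in> I \<Longrightarrow> M i \<in> carrier_mat n n"
    and N: "\<And>j. j \<in> J \<Longrightarrow> N j \<in> carrier_mat n n"
    and A_entries: "\<And>r c. r < n \<Longrightarrow> c < n \<Longrightarrow>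
      A $$ (r, c) = (\<Sum>i\<in>I. Poly_Mapping.single (a i) (M i $$ (r, c)))"
    and B_entries: "\<And>r c. r < n \<Longrightarrow> c < n \<Longrightarrow>
      B $$ (r, c) = (\<Sum>j\<in>J. Poly_Mapping.single (b j) (N j $$ (r, c)))"
    and "r < n" "q < n"
  shows "(A * B) $$ (r, q) =
    (\<Sum>i\<in>I. \<Sum>j\<in>J. Poly_Mapping.single (a i + b j) ((M i * N j) $$ (r, q)))"
proof -
  have "(A * B) $$ (r, q) = (\<Sum>c<n. A $$ (r, c) * B $$ (c, q))"
    using A B \<open>r < n\<close> \<open>q < n\<close>
    by (auto simp: scalar_prod_def atLeast0LessThan intro!: sum.cong)
  also have "\<dots> = (\<Sum>c<n. \<Sum>i\<in>I. \<Sum>j\<in>J.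
      Poly_Mapping.single (a i + b j) (M i $$ (r, c) * N j $$ (c, q)))"
    using \<open>r < n\<close> \<open>q < n\<close>
    by (simp add: A_entries B_entries sum_product mult_single)
  also have "\<dots> = (\<Sum>i\<in>I. \<Sum>j\<in>J. \<Sum>c<n.
      Poly_Mapping.single (a i + b j) (M i $$ (r, c) * N j $$ (c, q)))"
    by (subst sum.swap) (simp add: sum.swap[of _ "{..<n}"])
  also have "\<dots> = (\<Sum>i\<in>I. \<Sum>j\<in>J. Poly_Mapping.single (a i + b j) ((M i * N j) $$ (r, q)))"
  proof (intro sum.cong refl)
    fix i j assume "i \<in> I" "j \<in> J"
    then have "M i \<in> carrier_mat n n" "N j \<in> carrier_mat n n"
      using M N by auto
    then have "(M i * N j) $$ (r, q) = (\<Sum>c<n. M i $$ (r, c) * N j $$ (c, q))"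
      using \<open>r < n\<close> \<open>q < n\<close>
      by (auto simp: scalar_prod_def atLeast0LessThan intro!: sum.cong)
    then show "(\<Sum>c<n. Poly_Mapping.single (a i + b j) (M i $$ (r, c) * N j $$ (c, q))) =
        Poly_Mapping.single (a i + b j) ((M i * N j) $$ (r, q))"
      by (simp add: single_sum)
  qed
  finally show ?thesis .
qed

definition lmonom_exp :: "nat \<Rightarrow> (nat \<Rightarrow> nat) \<Rightarrow> nat \<Rightarrow>\<^sub>0 int" where
  "lmonom_exp k e = (\<Sum>j<k. Poly_Mapping.single j (int (e j)))"

lemma lmonom_eq_single: "lmonom a k e = Poly_Mapping.single (lmonom_exp k e) a"
  by (simp add: lmonom_def lmonom_exp_def)

lemma sum_sum_single_diagonal:
  fixes m :: "'i \<Rightarrow> 'k::ab_group_add"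
  assumes "finite I" and "\<And>i j. i \<in> I \<Longrightarrow> j \<in> I \<Longrightarrow> f i j = (if i = j then x i else 0)"
  shows "(\<Sum>i\<in>I. \<Sum>j\<in>I. Poly_Mapping.single (m i + - m j) (f i j)) =
    Poly_Mapping.single 0 (\<Sum>i\<in>I. x i)"
proof -
  have "(\<Sum>i\<in>I. \<Sum>j\<in>I. Poly_Mapping.single (m i + - m j) (f i j)) =
      (\<Sum>i\<in>I. \<Sum>j\<in>I. if i = j then Poly_Mapping.single 0 (x i) else 0)"
    using assms(2) by (intro sum.cong refl) simp
  also have "\<dots> = Poly_Mapping.single 0 (\<Sum>i\<in>I. x i)"
    using assms(1) by (simp add: single_sum)
  finally show ?thesis .
qed

lemma csoi_smult_mult:
  assumes "csoi s n t E" and "\<forall>i<t. \<alpha> i * s (\<alpha> i) = 1" and "i < t" "j < t"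
  shows "(\<alpha> i \<cdot>\<^sub>m E i) * (s (\<alpha> j) \<cdot>\<^sub>m E j) = (if i = j then E i else 0\<^sub>m n n)"
proof -
  have "E i \<in> carrier_mat n n" "E j \<in> carrier_mat n n"
    using assms(1,3,4) by (auto simp: csoi_def)
  then have "(\<alpha> i \<cdot>\<^sub>m E i) * (s (\<alpha> j) \<cdot>\<^sub>m E j) = (\<alpha> i * s (\<alpha> j)) \<cdot>\<^sub>m (E i * E j)"
    by (auto simp: mult_smult_assoc_mat mult_smult_distrib intro!: eq_matI)
  with assms show ?thesis
    by (auto simp: csoi_def)
qed

lemma index_Wmat:
  assumes "\<And>i. i < t \<Longrightarrow> E i \<in> carrier_mat n n" and "r < n" "c < n"
  shows "Wmat n t k \<alpha> tt E $$ (r, c) =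
    (\<Sum>i<t. Poly_Mapping.single (lmonom_exp k (tt i)) ((\<alpha> i \<cdot>\<^sub>m E i) $$ (r, c)))"
  unfolding Wmat_def msum_def
proof (intro index_mat(1)[THEN trans] sum.cong refl)
  fix i assume "i \<in> {..<t}"
  then have "dim_row (E i) = n" "dim_col (E i) = n"
    using assms(1) by auto
  then show "(lmonom (\<alpha> i) k (tt i) \<cdot>\<^sub>m map_mat lconst (E i)) $$ (r, c) =
      Poly_Mapping.single (lmonom_exp k (tt i)) ((\<alpha> i \<cdot>\<^sub>m E i) $$ (r, c))"
    using assms(2,3) by (simp add: lmonom_eq_single lconst_def mult_single)
qed (use assms(2,3) in auto)

lemma index_paraconj_Wmat:
  assumes s_add: "\<And>a b. s (a + b) = s a + s b" and s_mult: "\<And>a b. s (a * b) = s a * s b"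
    and E: "csoi s n t E" and "c < n" "q < n"
  shows "paraconj s (Wmat n t k \<alpha> tt E) $$ (c, q) =
    (\<Sum>j<t. Poly_Mapping.single (- lmonom_exp k (tt j)) ((s (\<alpha> j) \<cdot>\<^sub>m E j) $$ (c, q)))"
proof -
  have s0: "s 0 = 0"
    using s_add[of 0 0] by (metis add_cancel_right_right)
  have E_carrier: "\<And>j. j < t \<Longrightarrow> E j \<in> carrier_mat n n"
    using E by (simp add: csoi_def)
  have "s ((\<alpha> j \<cdot>\<^sub>m E j) $$ (q, c)) = (s (\<alpha> j) \<cdot>\<^sub>m E j) $$ (c, q)" if "j < t" for j
  proof -
    have "mstar s (E j) = E j"
      using E that by (simp add: csoi_def)
    from arg_cong[OF this, of "\<lambda>A. A $$ (c, q)"] show ?thesis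
      using E_carrier[OF that] \<open>c < n\<close> \<open>q < n\<close> by (simp add: mstar_def s_mult)
  qed
  moreover have "paraconj s (Wmat n t k \<alpha> tt E) $$ (c, q) = lconj s (Wmat n t k \<alpha> tt E $$ (q, c))"
    using \<open>c < n\<close> \<open>q < n\<close> by (simp add: paraconj_def Wmat_def msum_def)
  ultimately show ?thesis
    using \<open>c < n\<close> \<open>q < n\<close>
    by (auto simp: index_Wmat[OF E_carrier] lconj_sum_single[OF s0 s_add] intro!: sum.cong)
qed

lemma paraunitary_Wmat:
  fixes s :: "'a::field \<Rightarrow> 'a"
  assumes s_add: "\<And>a b. s (a + b) = s a + s b" and s_mult: "\<And>a b. s (a * b) = s a * s b"
    and E: "csoi s n t E" and \<alpha>: "\<forall>i<t. \<alpha> i * s (\<alpha> i) = 1"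
  shows "paraunitary s (Wmat n t k \<alpha> tt E)"
proof -
  define W where "W = Wmat n t k \<alpha> tt E"
  have E_carrier: "\<And>i. i < t \<Longrightarrow> E i \<in> carrier_mat n n"
    using E by (simp add: csoi_def)
  have W: "W \<in> carrier_mat n n" and P: "paraconj s W \<in> carrier_mat n n"
    by (simp_all add: W_def Wmat_def msum_def paraconj_def)
  have "(W * paraconj s W) $$ (r, q) = 1\<^sub>m n $$ (r, q)" if "r < n" "q < n" for r q
  proof -
    have "(W * paraconj s W) $$ (r, q) = (\<Sum>i<t. \<Sum>j<t.
        Poly_Mapping.single (lmonom_exp k (tt i) + - lmonom_exp k (tt j))
          (((\<alpha> i \<cdot>\<^sub>m E i) * (s (\<alpha> j) \<cdot>\<^sub>m E j)) $$ (r, q)))"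
      using E_carrier unfolding W_def
      by (intro index_mult_mat_monomial_sums[OF _ _ _ _ index_Wmat
            index_paraconj_Wmat[OF s_add s_mult E] that]) (auto simp: Wmat_def msum_def paraconj_def)
    also have "\<dots> = Poly_Mapping.single 0 (msum n t E $$ (r, q))"
      using that E_carrier
      by (subst sum_sum_single_diagonal) (auto simp: csoi_smult_mult[OF E \<alpha>] msum_def)
    also have "\<dots> = 1\<^sub>m n $$ (r, q)"
      using E that by (simp add: csoi_def)
    finally show ?thesis .
  qed
  with W P have "W * paraconj s W = 1\<^sub>m n"
    by (intro eq_matI) auto
  with W show ?thesis
    by (simp add: paraunitary_def W_def)
qed

theorem proposition14:
  shows "(\<forall>(n::nat) (t::nat) (k::nat) (E :: nat \<Rightarrow> 'a::field mat) (\<alpha> :: nat \<Rightarrow> 'a) (tt :: nat \<Rightarrow> nat \<Rightarrow> nat).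
            csoi id n t E \<and> (\<forall>i<t. \<alpha> i * id (\<alpha> i) = 1)
            \<longrightarrow> paraunitary id (Wmat n t k \<alpha> tt E))
       \<and> (\<forall>(n::nat) (t::nat) (k::nat) (E :: nat \<Rightarrow> complex mat) (\<alpha> :: nat \<Rightarrow> complex) (tt :: nat \<Rightarrow> nat \<Rightarrow> nat).
            csoi cnj n t E \<and> (\<forall>i<t. \<alpha> i * cnj (\<alpha> i) = 1)
            \<longrightarrow> paraunitary cnj (Wmat n t k \<alpha> tt E))"
  by (auto intro!: paraunitary_Wmat)

end
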